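(* Let $\mathbb{R}^n$ be endowed with the $\ell_1$ norm and $\mathbb{R}^m$ with an arbitrary norm $\|\cdot\|$. Suppose $A\in\mathbb{R}^{m\times n}$ has at least two different columns and $f:\mathbb{R}^m\to\mathbb{R}\cup\{\infty\}$ is a differentiable convex function that is $L_f$-smooth and $\mu_f$-strongly convex on $\mathrm{conv}(A)$. Then \[ L_{f,A}\le \frac{L_f\cdot \mathrm{diam}(A)^2}{4},\qquad \mu_{f,A}\ge\frac{\mu_f\cdot\Phi(A)^2}{4}, \] and in particular $\dfrac{L_{f,A}}{\mu_{f,A}}\le\dfrac{L_f}{\mu_f}\cdot\dfrac{\mathrm{diam}(A)^2}{\Phi(A)^2}$.
   Context: A differentiable convex $f$ is $L_f$-smooth (with $L_f>0$) on $S\subseteq\mathrm{dom}(f)$ if $f(v)\le f(u)+\langle\nabla f(u),v-u\rangle+\frac{L_f}{2}\|v-u\|^2$ for all $u,v\in S$, and $\mu_f$-strongly convex (with $\mu_f\ge0$) on $S$ if $f(v)\ge f(u)+\langle\nabla f(u),v-u\rangle+\frac{\mu_f}{2}\|v-u\|^2$ for all $u,v\in S$. $\Delta_{n-1}=\{x\in\mathbb{R}^n_+:\sum_ix_i=1\}$; $A$ is identified with the set of its columns; $\mathrm{conv}(A)=\{Ax:x\in\Delta_{n-1}\}$; for $u\in\mathrm{conv}(A)$, $Z(u)=\{z\in\Delta_{n-1}:Az=u\}$ and $\mathrm{dist}(x,Z(u))=\min_{z\in Z(u)}\|x-z\|_1$. The relative constants are \[ L_{f,A}=\sup_{u\in\mathrm{conv}(A),\,x\in\Delta_{n-1}\setminus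 Z(u)}\frac{2(f(Ax)-f(u)-\langle\nabla f(u),Ax-u\rangle)}{\mathrm{dist}(x,Z(u))^2}, \] and $\mu_{f,A}$ the same expression with $\inf$ instead of $\sup$. $\mathrm{diam}(A)=\sup_{u,w\in A}\|u-w\|$, and the facial distance is $\Phi(A)=\min\{\mathrm{dist}(F,\mathrm{conv}(A\setminus F)):F\text{ a face of }\mathrm{conv}(A),\ \emptyset\ne F\ne\mathrm{conv}(A)\}$, with $A\setminus F$ the columns of $A$ not in $F$ and $\mathrm{dist}(F,G)=\inf_{u\in F,w\in G}\|u-w\|$. *)

theory Defs
  imports "HOL-Analysis.Analysis"
begin

definition is_norm :: "('a::real_vector \<Rightarrow> real) \<Rightarrow> bool" where
  "is_norm N \<longleftrightarrow> (\<forall>x. N x = 0 \<longleftrightarrow> x = 0) \<and> (\<forall>x y. N (x + y) \<le> N x + N y)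
      \<and> (\<forall>c x. N (c *\<^sub>R x) = \<bar>c\<bar> * N x)"

definition l1norm :: "real^'n \<Rightarrow> real" where
  "l1norm x = (\<Sum>i\<in>UNIV. \<bar>x $ i\<bar>)"

definition std_simplex :: "(real^'n) set" where
  "std_simplex = {x. (\<forall>i. 0 \<le> x $ i) \<and> (\<Sum>i\<in>UNIV. x $ i) = 1}"

definition convA :: "real^'n^'m \<Rightarrow> (real^'m) set" where
  "convA A = {A *v x | x. x \<in> std_simplex}"

definition Zset :: "real^'n^'m \<Rightarrow> real^'m \<Rightarrow> (real^'n) set" where
  "Zset A u = {z \<in> std_simplex. A *v z = u}"

text \<open>dist(x, Z(u)) in the l1 norm (the minimum exists; written as an infimum).\<close>
definition distZ :: "real^'n^'m \<Rightarrow> real^'n \<Rightarrow> real^'m \<Rightarrow> real" where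
  "distZ A x u = Inf {l1norm (x - z) | z. z \<in> Zset A u}"

text \<open>Bregman-type gap f(v) - f(u) - <grad f(u), v - u>, with f' u the derivative at u.\<close>
definition breg :: "(real^'m \<Rightarrow> real) \<Rightarrow> (real^'m \<Rightarrow> real^'m \<Rightarrow> real) \<Rightarrow> real^'m \<Rightarrow> real^'m \<Rightarrow> real" where
  "breg f f' u v = f v - f u - f' u (v - u)"

definition rel_quot :: "(real^'m \<Rightarrow> real) \<Rightarrow> (real^'m \<Rightarrow> real^'m \<Rightarrow> real) \<Rightarrow> real^'n^'m
     \<Rightarrow> (real^'m) \<times> (real^'n) \<Rightarrow> ereal" where
  "rel_quot f f' A p = ereal (2 * breg f f' (fst p) (A *v snd p) / (distZ A (snd p) (fst p))\<^sup>2)"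

definition rel_pairs :: "real^'n^'m \<Rightarrow> ((real^'m) \<times> (real^'n)) set" where
  "rel_pairs A = {(u, x). u \<in> convA A \<and> x \<in> std_simplex - Zset A u}"

definition L_rel :: "(real^'m \<Rightarrow> real) \<Rightarrow> (real^'m \<Rightarrow> real^'m \<Rightarrow> real) \<Rightarrow> real^'n^'m \<Rightarrow> ereal" where
  "L_rel f f' A = (SUP p \<in> rel_pairs A. rel_quot f f' A p)"

definition mu_rel :: "(real^'m \<Rightarrow> real) \<Rightarrow> (real^'m \<Rightarrow> real^'m \<Rightarrow> real) \<Rightarrow> real^'n^'m \<Rightarrow> ereal" where
  "mu_rel f f' A = (INF p \<in> rel_pairs A. rel_quot f f' A p)"

definition smooth_on :: "(real^'m \<Rightarrow> real) \<Rightarrow> real \<Rightarrow> (real^'m \<Rightarrow> real) \<Rightarrow> (real^'m \<Rightarrow> real^'m \<Rightarrow> real)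
     \<Rightarrow> (real^'m) set \<Rightarrow> bool" where
  "smooth_on N L f f' S \<longleftrightarrow> L > 0 \<and>
     (\<forall>u\<in>S. \<forall>v\<in>S. f v \<le> f u + f' u (v - u) + L / 2 * (N (v - u))\<^sup>2)"

definition strongly_convex_wrt :: "(real^'m \<Rightarrow> real) \<Rightarrow> real \<Rightarrow> (real^'m \<Rightarrow> real) \<Rightarrow> (real^'m \<Rightarrow> real^'m \<Rightarrow> real)
     \<Rightarrow> (real^'m) set \<Rightarrow> bool" where
  "strongly_convex_wrt N \<mu> f f' S \<longleftrightarrow> \<mu> \<ge> 0 \<and>
     (\<forall>u\<in>S. \<forall>v\<in>S. f v \<ge> f u + f' u (v - u) + \<mu> / 2 * (N (v - u))\<^sup>2)"

definition diamA :: "(real^'m \<Rightarrow> real) \<Rightarrow> real^'n^'m \<Rightarrow> real" where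
  "diamA N A = Sup {N (column i A - column j A) | i j. True}"

definition setdistN :: "(real^'m \<Rightarrow> real) \<Rightarrow> (real^'m) set \<Rightarrow> (real^'m) set \<Rightarrow> real" where
  "setdistN N F G = Inf {N (u - w) | u w. u \<in> F \<and> w \<in> G}"

definition facial_dist :: "(real^'m \<Rightarrow> real) \<Rightarrow> real^'n^'m \<Rightarrow> real" where
  "facial_dist N A = Inf {setdistN N F (convex hull {column j A | j. column j A \<notin> F}) | F.
       F face_of convA A \<and> F \<noteq> {} \<and> F \<noteq> convA A}"

end

theory Submission
  imports Defs
begin

text \<open>Fix \<open>u \<in> conv(A)\<close> and \<open>x\<close> in the simplex, and let \<open>z \<in> Z(u)\<close> be nearest to \<open>x\<close> in
  \<open>\<ell>\<^sub>1\<close>. Splitting \<open>x - z\<close> into positive and negative parts gives \<open>x - z = t (p - q)\<close> with \<open>p, q\<close>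
  in the simplex and \<open>t = dist(x, Z(u))/2\<close>, so that \<open>Ax - u = t (Ap - Aq)\<close>. Since a norm is
  convex, \<open>\<parallel>Ap - Aq\<parallel> \<le> diam(A)\<close>. Conversely, let \<open>F\<close> be the smallest face of \<open>conv(A)\<close> containing
  \<open>Aq\<close>. No column in the support of \<open>p\<close> lies in \<open>F\<close>, since otherwise some mass of \<open>q\<close> could be
  shifted onto that column, producing a point of \<open>Z(u)\<close> closer to \<open>x\<close>. Hence \<open>Ap\<close> lies in the
  convex hull of the columns outside \<open>F\<close> and \<open>\<parallel>Ap - Aq\<parallel> \<ge> \<Phi>(A)\<close>. Inserting these two bounds
  on \<open>\<parallel>Ax - u\<parallel>\<close> into the smoothness and strong convexity inequalities gives the claim.\<close>

lemma is_norm_zero: "is_norm N \<Longrightarrow> N 0 = 0"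
  unfolding is_norm_def by auto

lemma is_norm_scaleR: "is_norm N \<Longrightarrow> N (c *\<^sub>R x) = \<bar>c\<bar> * N x"
  unfolding is_norm_def by auto

lemma is_norm_triangle: "is_norm N \<Longrightarrow> N (x + y) \<le> N x + N y"
  unfolding is_norm_def by auto

lemma is_norm_minus_commute: "is_norm N \<Longrightarrow> N (x - y) = N (y - x)"
  using is_norm_scaleR[of N "-1" "x - y"] by simp

lemma is_norm_nonneg: "is_norm N \<Longrightarrow> 0 \<le> N x"
  using is_norm_triangle[of N x "- x"] is_norm_minus_commute[of N 0 x] is_norm_zero[of N]
  by simp

lemma is_norm_pos: "is_norm N \<Longrightarrow> x \<noteq> 0 \<Longrightarrow> 0 < N x"
  using is_norm_nonneg[of N x] unfolding is_norm_def by force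

lemma convex_on_is_norm_diff:
  assumes N: "is_norm N" and "convex S"
  shows "convex_on S (\<lambda>x. N (x - c))"
proof (rule convex_onI[OF _ \<open>convex S\<close>])
  fix t :: real and x y
  assume "0 < t" "t < 1"
  have "(1 - t) *\<^sub>R x + t *\<^sub>R y - c = (1 - t) *\<^sub>R (x - c) + t *\<^sub>R (y - c)"
    by (simp add: algebra_simps)
  also have "N \<dots> \<le> N ((1 - t) *\<^sub>R (x - c)) + N (t *\<^sub>R (y - c))"
    by (rule is_norm_triangle[OF N])
  finally show "N ((1 - t) *\<^sub>R x + t *\<^sub>R y - c) \<le> (1 - t) * N (x - c) + t * N (y - c)"
    using is_norm_scaleR[OF N] \<open>0 < t\<close> \<open>t < 1\<close> by simp
qed

lemma continuous_on_is_norm: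
  fixes N :: "'a::euclidean_space \<Rightarrow> real"
  assumes "is_norm N"
  shows "continuous_on S N"
proof -
  have "continuous_on UNIV (\<lambda>x. N (x - 0))"
    by (rule convex_on_continuous[OF open_UNIV convex_on_is_norm_diff[OF assms convex_UNIV]])
  then show ?thesis
    using continuous_on_subset[of UNIV N S] by simp
qed

lemma matrix_vector_mult_columns: "(A::real^'n^'m) *v x = (\<Sum>k\<in>UNIV. x $ k *\<^sub>R column k A)"
  by (simp add: matrix_mult_sum scalar_mult_eq_scaleR)

lemma compact_std_simplex: "compact (std_simplex :: (real^'n) set)"
proof -
  have "closed (std_simplex :: (real^'n) set)"
    unfolding std_simplex_def
    by (intro closed_Collect_conj closed_Collect_all closed_Collect_le closed_Collect_eq
        continuous_intros)
  moreover have "bounded (std_simplex :: (real^'n) set)"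
  proof (unfold bounded_iff, intro exI ballI)
    fix x :: "real^'n"
    assume "x \<in> std_simplex"
    then have "(\<Sum>i\<in>UNIV. \<bar>x $ i\<bar>) = 1"
      by (simp add: std_simplex_def)
    then show "norm x \<le> 1"
      using norm_le_l1_cart[of x] by simp
  qed
  ultimately show ?thesis by (simp add: compact_eq_bounded_closed)
qed

lemma convex_std_simplex: "convex (std_simplex :: (real^'n) set)"
  unfolding convex_def std_simplex_def
  by (auto simp: sum.distrib sum_distrib_left[symmetric])

lemma axis_in_std_simplex: "axis i 1 \<in> (std_simplex :: (real^'n) set)"
  by (simp add: std_simplex_def axis_def)

lemma matrix_vector_mult_in_convA: "x \<in> std_simplex \<Longrightarrow> A *v x \<in> convA A"
  unfolding convA_def by auto

lemma column_in_convA: "column i A \<in> convA A"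
  using matrix_vector_mult_in_convA[OF axis_in_std_simplex, of A i]
  by (simp add: matrix_vector_mult_basis)

lemma matrix_vector_mult_in_convex_hull:
  fixes A :: "real^'n^'m"
  assumes x: "x \<in> std_simplex" and K: "\<And>k. x $ k \<noteq> 0 \<Longrightarrow> column k A \<in> K"
  shows "A *v x \<in> convex hull K"
proof -
  define I where "I = {k. x $ k \<noteq> 0}"
  have sum_I: "(\<Sum>k\<in>I. x $ k) = (\<Sum>k\<in>UNIV. x $ k)"
    unfolding I_def by (rule sum.mono_neutral_left) auto
  have "A *v x = (\<Sum>k\<in>I. x $ k *\<^sub>R column k A)"
    unfolding matrix_vector_mult_columns I_def by (rule sum.mono_neutral_right) auto
  also have "\<dots> \<in> convex hull K"
    by (rule convex_sum) (use x K sum_I in \<open>auto simp: I_def std_simplex_def intro: hull_inc\<close>)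
  finally show ?thesis .
qed

lemma convA_eq_convex_hull: "convA A = convex hull (range (\<lambda>i. column i A))"
proof (rule hull_unique[symmetric])
  show "range (\<lambda>i. column i A) \<subseteq> convA A"
    using column_in_convA by blast
  show "convex (convA A)"
    unfolding convA_def
    using convex_linear_image[OF matrix_vector_mul_linear convex_std_simplex, of A]
    by (simp add: image_def Setcompr_eq_image Bex_def conj_commute eq_commute)
  show "convA A \<subseteq> T" if "range (\<lambda>i. column i A) \<subseteq> T" "convex T" for T
  proof
    fix y
    assume "y \<in> convA A"
    then obtain x where x: "x \<in> std_simplex" "y = A *v x"
      by (auto simp: convA_def)
    have "A *v x \<in> convex hull T"
      by (rule matrix_vector_mult_in_convex_hull[OF x(1)]) (use that in auto)
    then show "y \<in> T"
      using x(2) hull_same[of convex T] that(2) by simp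
  qed
qed

lemma convex_convA: "convex (convA A)"
  by (simp add: convA_eq_convex_hull)

lemma polytope_convA: "polytope (convA A)"
  unfolding polytope_def convA_eq_convex_hull by (intro exI[of _ "range (\<lambda>i. column i A)"]) simp

lemma column_diff_le_diamA: "N (column i A - column j A) \<le> diamA N A"
proof -
  have "{N (column i A - column j A) | i j. True}
      = (\<lambda>(i, j). N (column i A - column j A)) ` UNIV"
    by auto
  then show ?thesis
    unfolding diamA_def by (intro cSup_upper bdd_above_finite) auto
qed

lemma is_norm_diff_le_diamA:
  assumes N: "is_norm N" and P: "P \<in> convA A" and Q: "Q \<in> convA A"
  shows "N (Q - P) \<le> diamA N A"
proof -
  let ?C = "range (\<lambda>i. column i A)"
  have bound: "N (y - c) \<le> diamA N A"
    if "y \<in> convA A" and "\<And>i. N (column i A - c) \<le> diamA N A" for y c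
    using convex_on_convex_hull_bound[OF convex_on_is_norm_diff[OF N convex_convex_hull], of ?C c]
      that by (simp add: convA_eq_convex_hull)
  have "N (P - column i A) \<le> diamA N A" for i
    using bound[OF P] column_diff_le_diamA[of N _ A i] by blast
  then show ?thesis
    using bound[OF Q, of P] is_norm_minus_commute[OF N] by metis
qed

lemma std_simplex_diff_split:
  fixes x z :: "real^'n"
  assumes x: "x \<in> std_simplex" and z: "z \<in> std_simplex" and "x \<noteq> z"
  obtains t p q where "0 < t" "p \<in> std_simplex" "q \<in> std_simplex" "x - z = t *\<^sub>R (p - q)"
    "l1norm (x - z) = 2 * t" "\<And>k. t * q $ k \<le> z $ k"
proof -
  define p' where "p' = (\<chi> k. max (x $ k - z $ k) 0)"
  define q' where "q' = (\<chi> k. max (z $ k - x $ k) 0)"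
  define t where "t = (\<Sum>k\<in>UNIV. p' $ k)"
  have diff: "x - z = p' - q'"
    by (simp add: p'_def q'_def vec_eq_iff max_def)
  have "(\<Sum>k\<in>UNIV. (x - z) $ k) = 0"
    using x z by (simp add: std_simplex_def sum_subtractf)
  then have t_q': "t = (\<Sum>k\<in>UNIV. q' $ k)"
    by (simp add: diff t_def sum_subtractf)
  have "l1norm (x - z) = (\<Sum>k\<in>UNIV. p' $ k) + (\<Sum>k\<in>UNIV. q' $ k)"
    unfolding l1norm_def p'_def q'_def sum.distrib[symmetric] by (intro sum.cong) auto
  then have l1: "l1norm (x - z) = 2 * t"
    using t_q' t_def by simp
  have "0 < l1norm (x - z)"
  proof -
    obtain k where "(x - z) $ k \<noteq> 0"
      using \<open>x \<noteq> z\<close> by (auto simp: vec_eq_iff)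
    then show ?thesis
      unfolding l1norm_def by (intro sum_pos2[of _ k]) auto
  qed
  then have "0 < t" using l1 by simp
  show ?thesis
  proof
    show "(1 / t) *\<^sub>R p' \<in> std_simplex" "(1 / t) *\<^sub>R q' \<in> std_simplex"
      using \<open>0 < t\<close> t_q' unfolding std_simplex_def t_def p'_def q'_def
      by (auto simp: sum_divide_distrib[symmetric])
    show "x - z = t *\<^sub>R ((1 / t) *\<^sub>R p' - (1 / t) *\<^sub>R q')"
      using \<open>0 < t\<close> diff by (simp add: scaleR_diff_right)
    show "t * ((1 / t) *\<^sub>R q') $ k \<le> z $ k" for k
      using \<open>0 < t\<close> x z by (simp add: q'_def std_simplex_def)
  qed fact+
qed

lemma is_norm_matrix_diff_le:
  assumes N: "is_norm N" and x: "x \<in> std_simplex" and z: "z \<in> std_simplex"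
  shows "N (A *v x - A *v z) \<le> l1norm (x - z) / 2 * diamA N A"
proof (cases "x = z")
  case True
  then show ?thesis by (simp add: is_norm_zero[OF N] l1norm_def)
next
  case False
  obtain t p q where t: "0 < t" and p: "p \<in> std_simplex" and q: "q \<in> std_simplex"
    and xz: "x - z = t *\<^sub>R (p - q)" and l1: "l1norm (x - z) = 2 * t"
    using std_simplex_diff_split[OF x z False] .
  have "N (A *v x - A *v z) = t * N (A *v p - A *v q)"
    using t is_norm_scaleR[OF N]
    by (simp add: matrix_vector_mult_diff_distrib[symmetric] xz matrix_vector_mult_scaleR)
  also have "\<dots> \<le> t * diamA N A"
    using t is_norm_diff_le_diamA[OF N matrix_vector_mult_in_convA[OF q] matrix_vector_mult_in_convA[OF p]]
    by simp
  finally show ?thesis using l1 by simp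
qed

lemma compact_Zset: "compact (Zset (A::real^'n^'m) u)"
proof -
  have "Zset A u = std_simplex \<inter> {z. A *v z = u}"
    by (auto simp: Zset_def)
  moreover have "closed {z::real^'n. A *v z = u}"
    by (intro closed_Collect_eq continuous_intros linear_continuous_on)
       (simp add: linear_conv_bounded_linear[symmetric])
  ultimately show ?thesis
    using compact_Int_closed[OF compact_std_simplex] by simp
qed

lemma distZ_attained:
  assumes "u \<in> convA A"
  obtains z where "z \<in> Zset A u" "distZ A x u = l1norm (x - z)"
    "\<And>z'. z' \<in> Zset A u \<Longrightarrow> l1norm (x - z) \<le> l1norm (x - z')"
proof -
  have "Zset A u \<noteq> {}"
    using assms by (auto simp: convA_def Zset_def)
  moreover have "continuous_on (Zset A u) (\<lambda>z. l1norm (x - z))"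
    unfolding l1norm_def by (intro continuous_intros)
  ultimately obtain z where z: "z \<in> Zset A u" "\<forall>z'\<in>Zset A u. l1norm (x - z) \<le> l1norm (x - z')"
    using continuous_attains_inf[OF compact_Zset] by blast
  moreover have "distZ A x u = l1norm (x - z)"
    unfolding distZ_def by (rule cInf_eq_minimum) (use z in auto)
  ultimately show ?thesis using that by blast
qed

lemma distZ_pos:
  assumes "u \<in> convA A" and "x \<notin> Zset A u"
  shows "0 < distZ A x u"
proof -
  obtain z where "z \<in> Zset A u" "distZ A x u = l1norm (x - z)"
    using distZ_attained[OF assms(1)] .
  moreover obtain k where "(x - z) $ k \<noteq> 0"
    using assms(2) \<open>z \<in> Zset A u\<close> by (metis eq_iff_diff_eq_0 vec_eq_iff zero_index)
  ultimately show ?thesis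
    unfolding l1norm_def by (auto intro!: sum_pos2[of _ k])
qed

lemma is_norm_le_distZ_diamA:
  assumes N: "is_norm N" and u: "u \<in> convA A" and x: "x \<in> std_simplex"
  shows "N (A *v x - u) \<le> distZ A x u / 2 * diamA N A"
proof -
  obtain z where "z \<in> Zset A u" "distZ A x u = l1norm (x - z)"
    using distZ_attained[OF u] .
  then show ?thesis
    using is_norm_matrix_diff_le[OF N x, of z A] by (auto simp: Zset_def)
qed

section \<open>The smallest face through a point\<close>

text \<open>For convex \<open>S\<close> and \<open>P \<in> S\<close>, the smallest face of \<open>S\<close> containing \<open>P\<close>.\<close>

definition prolong_face :: "'a::real_vector set \<Rightarrow> 'a \<Rightarrow> 'a set" where
  "prolong_face S P = {v \<in> S. \<exists>\<delta>>0. P + \<delta> *\<^sub>R (P - v) \<in> S}"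

lemma prolong_within_convex:
  fixes P v :: "'a::real_vector"
  assumes S: "convex S" and P: "P \<in> S" and Q: "P + \<delta> *\<^sub>R (P - v) \<in> S"
    and "0 < \<delta>" "0 \<le> \<delta>'" "\<delta>' \<le> \<delta>"
  shows "P + \<delta>' *\<^sub>R (P - v) \<in> S"
proof -
  have "P + \<delta>' *\<^sub>R (P - v) = (1 - \<delta>' / \<delta>) *\<^sub>R P + (\<delta>' / \<delta>) *\<^sub>R (P + \<delta> *\<^sub>R (P - v))"
    using \<open>0 < \<delta>\<close> by (simp add: algebra_simps)
  also have "\<dots> \<in> S"
    using assms by (intro convexD[OF S P Q]) (auto simp: field_simps)
  finally show ?thesis .
qed

lemma convex_prolong_face:
  assumes S: "convex S" and P: "P \<in> S"
  shows "convex (prolong_face S P)"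
  unfolding convex_def
proof (intro ballI allI impI)
  fix v w and a b :: real
  assume v: "v \<in> prolong_face S P" and w: "w \<in> prolong_face S P"
    and ab: "0 \<le> a" "0 \<le> b" "a + b = 1"
  obtain d1 where d1: "0 < d1" "P + d1 *\<^sub>R (P - v) \<in> S" "v \<in> S"
    using v by (auto simp: prolong_face_def)
  obtain d2 where d2: "0 < d2" "P + d2 *\<^sub>R (P - w) \<in> S" "w \<in> S"
    using w by (auto simp: prolong_face_def)
  define d where "d = min d1 d2"
  have b: "b = 1 - a"
    using ab(3) by simp
  have "P + d *\<^sub>R (P - (a *\<^sub>R v + b *\<^sub>R w))
      = a *\<^sub>R (P + d *\<^sub>R (P - v)) + b *\<^sub>R (P + d *\<^sub>R (P - w))"
    unfolding b by (simp add: algebra_simps)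
  also have "\<dots> \<in> S"
  proof (rule convexD[OF S _ _ ab])
    show "P + d *\<^sub>R (P - v) \<in> S" "P + d *\<^sub>R (P - w) \<in> S"
      using d1(1) d2(1) by (auto simp: d_def intro!: prolong_within_convex[OF S P d1(2) d1(1)]
          prolong_within_convex[OF S P d2(2) d2(1)])
  qed
  finally have "P + d *\<^sub>R (P - (a *\<^sub>R v + b *\<^sub>R w)) \<in> S" .
  moreover have "a *\<^sub>R v + b *\<^sub>R w \<in> S"
    using ab d1(3) d2(3) by (intro convexD[OF S]) auto
  ultimately show "a *\<^sub>R v + b *\<^sub>R w \<in> prolong_face S P"
    using d1(1) d2(1) unfolding prolong_face_def d_def by (auto intro!: exI[of _ "min d1 d2"])
qed

lemma prolong_face_open_segment:
  assumes S: "convex S" and a: "a \<in> S" and b: "b \<in> S"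
    and y: "y \<in> open_segment a b" and yP: "y \<in> prolong_face S P"
  shows "a \<in> prolong_face S P"
proof -
  obtain s where s: "0 < s" "s < 1" "y = (1 - s) *\<^sub>R a + s *\<^sub>R b"
    using y by (auto simp: in_segment)
  obtain d where d: "0 < d" "P + d *\<^sub>R (P - y) \<in> S"
    using yP by (auto simp: prolong_face_def)
  define l where "l = 1 / (1 + d * s)"
  have ds: "0 < d * s"
    using s d by simp
  then have l: "0 < l" "l \<le> 1" "l + l * d * s = 1"
    by (auto simp: l_def field_simps)
  have coeff: "1 + l * d * (1 - s) = l * (1 + d)" "0 = 1 - l - l * d * s"
    using l(3) by (simp_all add: algebra_simps)
  have "P + (l * d * (1 - s)) *\<^sub>R (P - a)
      = (1 + l * d * (1 - s)) *\<^sub>R P - (l * d * (1 - s)) *\<^sub>R a + 0 *\<^sub>R b"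
    by (simp add: algebra_simps)
  also have "\<dots> = (l * (1 + d)) *\<^sub>R P - (l * d * (1 - s)) *\<^sub>R a + (1 - l - l * d * s) *\<^sub>R b"
    by (simp only: coeff)
  also have "\<dots> = l *\<^sub>R (P + d *\<^sub>R (P - y)) + (1 - l) *\<^sub>R b"
    unfolding s(3) by (simp add: algebra_simps)
  also have "\<dots> \<in> S"
    using l by (intro convexD[OF S d(2) b]) auto
  finally show ?thesis
    using a s d l unfolding prolong_face_def by (auto intro!: exI[of _ "l * d * (1 - s)"])
qed

lemma face_of_prolong_face:
  assumes "convex S" and "P \<in> S"
  shows "prolong_face S P face_of S"
  unfolding face_of_def
proof (intro conjI ballI impI)
  show "prolong_face S P \<subseteq> S"
    by (auto simp: prolong_face_def)
  show "convex (prolong_face S P)"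
    by (rule convex_prolong_face[OF assms])
  fix a b y
  assume "a \<in> S" "b \<in> S" "y \<in> prolong_face S P" "y \<in> open_segment a b"
  then show "a \<in> prolong_face S P" "b \<in> prolong_face S P"
    using prolong_face_open_segment[OF assms(1), of a b y] prolong_face_open_segment[OF assms(1), of b a y]
    by (simp_all add: open_segment_commute)
qed

lemma mem_prolong_face_self: "P \<in> S \<Longrightarrow> P \<in> prolong_face S P"
  unfolding prolong_face_def by (auto intro: exI[of _ 1])

lemma prolong_face_convex_combination:
  assumes S: "convex S" and P: "P \<in> S" and v: "v \<in> prolong_face S P" and "0 < \<eta>"
  obtains \<epsilon> R where "0 < \<epsilon>" "\<epsilon> \<le> \<eta>" "\<epsilon> < 1" "R \<in> S" "P = \<epsilon> *\<^sub>R v + (1 - \<epsilon>) *\<^sub>R R"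
proof -
  obtain \<delta> where \<delta>: "0 < \<delta>" "P + \<delta> *\<^sub>R (P - v) \<in> S"
    using v by (auto simp: prolong_face_def)
  define \<delta>' where "\<delta>' = min \<delta> \<eta>"
  define \<epsilon> where "\<epsilon> = \<delta>' / (1 + \<delta>')"
  have \<delta>': "0 < \<delta>'" "\<delta>' \<le> \<delta>" "\<delta>' \<le> \<eta>"
    using \<delta> \<open>0 < \<eta>\<close> by (auto simp: \<delta>'_def)
  have \<epsilon>: "0 < \<epsilon>" "\<epsilon> \<le> \<delta>'" "\<epsilon> < 1" "(1 - \<epsilon>) * (1 + \<delta>') = 1" "\<epsilon> = (1 - \<epsilon>) * \<delta>'"
    using \<delta>' by (simp_all add: \<epsilon>_def field_simps)
  have "\<epsilon> *\<^sub>R v + (1 - \<epsilon>) *\<^sub>R (P + \<delta>' *\<^sub>R (P - v))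
      = ((1 - \<epsilon>) * (1 + \<delta>')) *\<^sub>R P + (\<epsilon> - (1 - \<epsilon>) * \<delta>') *\<^sub>R v"
    by (simp add: algebra_simps)
  then have "P = \<epsilon> *\<^sub>R v + (1 - \<epsilon>) *\<^sub>R (P + \<delta>' *\<^sub>R (P - v))"
    using \<epsilon>(4,5) by simp
  moreover have "P + \<delta>' *\<^sub>R (P - v) \<in> S"
    using \<delta>' by (intro prolong_within_convex[OF S P \<delta>(2) \<delta>(1)]) auto
  ultimately show ?thesis
    using that \<epsilon> \<delta>'(3) by fastforce
qed

section \<open>The lower bound through the facial distance\<close>

lemma std_simplex_move_mass:
  assumes z: "z \<in> std_simplex" and q: "q \<in> std_simplex" and r: "r \<in> std_simplex"
    and "0 \<le> t" and qz: "\<And>k. t * q $ k \<le> z $ k"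
  shows "z + t *\<^sub>R (r - q) \<in> std_simplex"
proof -
  have "0 \<le> (z + t *\<^sub>R (r - q)) $ k" for k
  proof -
    have "(z + t *\<^sub>R (r - q)) $ k = (z $ k - t * q $ k) + t * r $ k"
      by (simp add: algebra_simps)
    moreover have "0 \<le> r $ k"
      using r by (simp add: std_simplex_def)
    ultimately show ?thesis
      using qz[of k] mult_nonneg_nonneg[OF \<open>0 \<le> t\<close>, of "r $ k"] by simp
  qed
  moreover have "(\<Sum>k\<in>UNIV. (z + t *\<^sub>R (r - q)) $ k) = 1"
    using z q r by (simp add: std_simplex_def sum.distrib sum_subtractf flip: sum_distrib_left)
  ultimately show ?thesis
    by (simp add: std_simplex_def)
qed

lemma l1norm_diff_le_sum:
  assumes "\<And>k. 0 \<le> a $ k" "\<And>k. 0 \<le> b $ k"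
  shows "l1norm (a - b) \<le> (\<Sum>k\<in>UNIV. a $ k) + (\<Sum>k\<in>UNIV. b $ k)"
  unfolding l1norm_def sum.distrib[symmetric]
  by (intro sum_mono) (use assms in \<open>simp add: abs_le_iff\<close>)

lemma l1norm_scaleR: "l1norm (c *\<^sub>R x) = \<bar>c\<bar> * l1norm x"
  by (simp add: l1norm_def abs_mult sum_distrib_left)

lemma l1norm_diff_shift_le:
  assumes p: "p \<in> std_simplex" and c: "c \<in> std_simplex" and \<epsilon>: "0 \<le> \<epsilon>" "\<epsilon> \<le> p $ i" "\<epsilon> \<le> 1"
  shows "l1norm (p - (\<epsilon> *\<^sub>R axis i 1 + (1 - \<epsilon>) *\<^sub>R c)) \<le> 2 * (1 - \<epsilon>)"
proof -
  have "0 \<le> (p - \<epsilon> *\<^sub>R axis i 1) $ k" for k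
    using p \<epsilon> by (auto simp: axis_def std_simplex_def)
  moreover have "0 \<le> ((1 - \<epsilon>) *\<^sub>R c) $ k" for k
    using c \<epsilon> by (simp add: std_simplex_def)
  ultimately have "l1norm ((p - \<epsilon> *\<^sub>R axis i 1) - (1 - \<epsilon>) *\<^sub>R c)
      \<le> (\<Sum>k\<in>UNIV. (p - \<epsilon> *\<^sub>R axis i 1) $ k) + (\<Sum>k\<in>UNIV. ((1 - \<epsilon>) *\<^sub>R c) $ k)"
    by (rule l1norm_diff_le_sum)
  also have "\<dots> = 2 * (1 - \<epsilon>)"
    using p c by (simp add: std_simplex_def sum_subtractf axis_def flip: sum_distrib_left)
  finally show ?thesis
    by (simp add: algebra_simps)
qed

text \<open>If \<open>z\<close> is a nearest point of the fibre and \<open>x - z = t (p - q)\<close>, a column in the support of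
  \<open>p\<close> cannot lie in the face through \<open>A q\<close>: otherwise part of the mass of \<open>q\<close> could be moved
  onto that column without changing \<open>A z\<close>, which brings \<open>z\<close> strictly closer to \<open>x\<close>.\<close>

lemma column_notin_prolong_face:
  fixes A :: "real^'n^'m"
  assumes z: "z \<in> Zset A u"
    and nearest: "\<And>z'. z' \<in> Zset A u \<Longrightarrow> l1norm (x - z) \<le> l1norm (x - z')"
    and t: "0 < t" and p: "p \<in> std_simplex" and q: "q \<in> std_simplex"
    and xz: "x - z = t *\<^sub>R (p - q)" and l1: "l1norm (x - z) = 2 * t"
    and qz: "\<And>k. t * q $ k \<le> z $ k" and i: "0 < p $ i"
  shows "column i A \<notin> prolong_face (convA A) (A *v q)"
proof
  assume "column i A \<in> prolong_face (convA A) (A *v q)"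
  then obtain \<epsilon> R where \<epsilon>: "0 < \<epsilon>" "\<epsilon> \<le> p $ i" "\<epsilon> < 1" and "R \<in> convA A"
    and Aq: "A *v q = \<epsilon> *\<^sub>R column i A + (1 - \<epsilon>) *\<^sub>R R"
    using prolong_face_convex_combination[OF convex_convA matrix_vector_mult_in_convA[OF q] _ i]
    by blast
  then obtain c where c: "c \<in> std_simplex" "R = A *v c"
    by (auto simp: convA_def)
  define r where "r = \<epsilon> *\<^sub>R axis i 1 + (1 - \<epsilon>) *\<^sub>R c"
  have r: "r \<in> std_simplex"
    unfolding r_def using \<epsilon> by (intro convexD[OF convex_std_simplex axis_in_std_simplex c(1)]) auto
  have "A *v r = A *v q"
    using Aq c(2)
    by (simp add: r_def matrix_vector_right_distrib matrix_vector_mult_scaleR matrix_vector_mult_basis)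
  then have "z + t *\<^sub>R (r - q) \<in> Zset A u"
    using z std_simplex_move_mass[OF _ q r _ qz] t
    by (simp add: Zset_def matrix_vector_right_distrib matrix_vector_mult_diff_distrib
        matrix_vector_mult_scaleR)
  then have "2 * t \<le> l1norm (t *\<^sub>R (p - r))"
    using nearest[of "z + t *\<^sub>R (r - q)"] l1 xz by (simp add: algebra_simps)
  also have "\<dots> \<le> t * (2 * (1 - \<epsilon>))"
    using l1norm_diff_shift_le[OF p c(1), of \<epsilon> i] t \<epsilon> by (simp add: l1norm_scaleR r_def)
  finally show False
    using mult_pos_pos[OF t \<epsilon>(1)] by (simp add: algebra_simps)
qed

lemma setdistN_le:
  assumes "is_norm N" and "a \<in> F" and "b \<in> H"
  shows "setdistN N F H \<le> N (a - b)"
  unfolding setdistN_def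
proof (rule cInf_lower)
  show "N (a - b) \<in> {N (u - w) |u w. u \<in> F \<and> w \<in> H}"
    using assms by blast
  show "bdd_below {N (u - w) |u w. u \<in> F \<and> w \<in> H}"
    using is_norm_nonneg[OF assms(1)] by (auto intro: bdd_belowI[of _ 0])
qed

lemma exists_face_distZ_setdistN_le:
  fixes A :: "real^'n^'m"
  assumes N: "is_norm N" and u: "u \<in> convA A" and x: "x \<in> std_simplex" and xu: "x \<notin> Zset A u"
  obtains F where "F face_of convA A" "F \<noteq> {}" "F \<noteq> convA A"
    "distZ A x u / 2 * setdistN N F (convex hull {column j A | j. column j A \<notin> F}) \<le> N (A *v x - u)"
proof -
  obtain z where z: "z \<in> Zset A u" and dz: "distZ A x u = l1norm (x - z)"
    and nearest: "\<And>z'. z' \<in> Zset A u \<Longrightarrow> l1norm (x - z) \<le> l1norm (x - z')"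
    using distZ_attained[OF u, of x] by blast
  have zs: "z \<in> std_simplex" and Az: "A *v z = u"
    using z by (auto simp: Zset_def)
  obtain t p q where t: "0 < t" and p: "p \<in> std_simplex" and q: "q \<in> std_simplex"
    and xz: "x - z = t *\<^sub>R (p - q)" and l1: "l1norm (x - z) = 2 * t" and qz: "\<And>k. t * q $ k \<le> z $ k"
    using std_simplex_diff_split[OF x zs] xu z by metis
  define G where "G = prolong_face (convA A) (A *v q)"
  define H where "H = convex hull {column j A | j. column j A \<notin> G}"
  have "G face_of convA A" "A *v q \<in> G"
    unfolding G_def using matrix_vector_mult_in_convA[OF q, of A]
    by (simp_all add: face_of_prolong_face convex_convA mem_prolong_face_self)
  have notin: "column k A \<notin> G" if "p $ k \<noteq> 0" for k
    using column_notin_prolong_face[OF z nearest t p q xz l1 qz] that p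
    by (auto simp: G_def std_simplex_def order.strict_iff_order)
  have "A *v p \<in> H"
    unfolding H_def by (rule matrix_vector_mult_in_convex_hull[OF p]) (use notin in blast)
  obtain k where "p $ k \<noteq> 0"
    using p by (force simp: std_simplex_def)
  then have "G \<noteq> convA A"
    using notin column_in_convA by blast
  have "distZ A x u / 2 * setdistN N G H \<le> t * N (A *v q - A *v p)"
    using setdistN_le[OF N \<open>A *v q \<in> G\<close> \<open>A *v p \<in> H\<close>] t dz l1 by simp
  also have "\<dots> = N (A *v x - u)"
    using xz Az t is_norm_scaleR[OF N, of t] is_norm_minus_commute[OF N]
    by (metis abs_of_pos matrix_vector_mult_diff_distrib matrix_vector_mult_scaleR)
  finally show ?thesis
    using that \<open>G face_of convA A\<close> \<open>A *v q \<in> G\<close> \<open>G \<noteq> convA A\<close> unfolding H_def by blast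
qed

section \<open>Positivity of the facial distance\<close>

lemma convex_diff_face:
  assumes S: "convex S" and F: "F face_of S"
  shows "convex (S - F)"
  unfolding convex_def
proof (intro ballI allI impI)
  fix a b and s t :: real
  assume a: "a \<in> S - F" and b: "b \<in> S - F" and st: "0 \<le> s" "0 \<le> t" "s + t = 1"
  have "s *\<^sub>R a + t *\<^sub>R b \<in> S"
    using a b st by (simp add: convexD[OF S])
  moreover have "s *\<^sub>R a + t *\<^sub>R b \<notin> F"
  proof
    assume y: "s *\<^sub>R a + t *\<^sub>R b \<in> F"
    consider "s = 0" | "t = 0" | "a = b" | "s *\<^sub>R a + t *\<^sub>R b \<in> open_segment a b"
      using st by (force simp: in_segment intro: exI[of _ t])
    then show False
    proof cases
      case 4
      then show False
        using face_ofD[OF F _ _ _ y] a b by blast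
    qed (use y a b st in \<open>auto simp flip: scaleR_add_left\<close>)
  qed
  ultimately show "s *\<^sub>R a + t *\<^sub>R b \<in> S - F"
    by blast
qed

lemma setdistN_pos:
  fixes N :: "real^'m \<Rightarrow> real"
  assumes N: "is_norm N" and "compact F" "compact H" "F \<noteq> {}" "H \<noteq> {}" "F \<inter> H = {}"
  shows "0 < setdistN N F H"
proof -
  have "continuous_on (F \<times> H) (\<lambda>y. N (fst y - snd y))"
    by (rule continuous_on_compose2[OF continuous_on_is_norm[OF N, of UNIV]])
      (intro continuous_intros, simp)
  moreover have "F \<times> H \<noteq> {}"
    using assms(4,5) by simp
  ultimately obtain y where y: "y \<in> F \<times> H"
    and min: "\<forall>y'\<in>F \<times> H. N (fst y - snd y) \<le> N (fst y' - snd y')"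
    using continuous_attains_inf[OF compact_Times[OF assms(2,3)]] by blast
  have "setdistN N F H = N (fst y - snd y)"
    unfolding setdistN_def by (rule cInf_eq_minimum) (use y min in force)+
  moreover have "fst y \<noteq> snd y"
    using y assms(6) by auto
  ultimately show ?thesis
    using is_norm_pos[OF N] by simp
qed

lemma setdistN_face_pos:
  fixes A :: "real^'n^'m"
  assumes N: "is_norm N" and F: "F face_of convA A" "F \<noteq> {}" "F \<noteq> convA A"
  shows "0 < setdistN N F (convex hull {column j A | j. column j A \<notin> F})"
proof (rule setdistN_pos[OF N])
  let ?K = "{column j A | j. column j A \<notin> F}"
  have finite_K: "finite ?K"
    by (rule finite_subset[of _ "range (\<lambda>j. column j A)"]) auto
  have "convex hull ?K \<subseteq> convA A - F"
    using column_in_convA by (intro hull_minimal convex_diff_face[OF convex_convA F(1)]) blast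
  then show "F \<inter> convex hull ?K = {}"
    by blast
  show "compact F"
    by (rule face_of_imp_compact[OF convex_convA polytope_imp_compact[OF polytope_convA] F(1)])
  show "compact (convex hull ?K)"
    using finite_K by (simp add: compact_convex_hull finite_imp_compact)
  show "F \<noteq> {}"
    by (fact F(2))
  have "\<not> range (\<lambda>j. column j A) \<subseteq> F"
    using hull_minimal[of _ F convex] face_of_imp_convex[OF F(1)] face_of_imp_subset[OF F(1)] F(3)
    unfolding convA_eq_convex_hull by blast
  then show "convex hull ?K \<noteq> {}"
    by auto
qed

lemma facial_dist_le:
  fixes A :: "real^'n^'m"
  assumes N: "is_norm N" and F: "F face_of convA A" "F \<noteq> {}" "F \<noteq> convA A"
  shows "facial_dist N A \<le> setdistN N F (convex hull {column j A | j. column j A \<notin> F})"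
  unfolding facial_dist_def
  using F setdistN_face_pos[OF N] by (intro cInf_lower bdd_belowI[of _ 0]) (auto intro: less_imp_le)

lemma facial_dist_pos:
  fixes A :: "real^'n^'m"
  assumes N: "is_norm N" and F: "F face_of convA A" "F \<noteq> {}" "F \<noteq> convA A"
  shows "0 < facial_dist N A"
proof -
  define g where "g F = setdistN N F (convex hull {column j A | j. column j A \<notin> F})" for F
  define Fs where "Fs = {F. F face_of convA A \<and> F \<noteq> {} \<and> F \<noteq> convA A}"
  have "finite Fs"
    using finite_polytope_faces[OF polytope_convA] by (rule finite_subset[rotated]) (auto simp: Fs_def)
  moreover have "Fs \<noteq> {}"
    using F by (auto simp: Fs_def)
  moreover have "facial_dist N A = Inf (g ` Fs)"
    unfolding facial_dist_def g_def Fs_def by (rule arg_cong[where f = Inf]) auto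
  ultimately show ?thesis
    using setdistN_face_pos[OF N] by (simp add: cInf_eq_Min g_def Fs_def) blast
qed

lemma rel_quot_le:
  fixes A :: "real^'n^'m"
  assumes N: "is_norm N" and smooth: "smooth_on N Lf f f' (convA A)" and p: "p \<in> rel_pairs A"
  shows "rel_quot f f' A p \<le> ereal (Lf * (diamA N A)\<^sup>2 / 4)"
proof -
  obtain u x where p_eq: "p = (u, x)" and u: "u \<in> convA A" and x: "x \<in> std_simplex"
    and xu: "x \<notin> Zset A u"
    using p by (auto simp: rel_pairs_def)
  define d where "d = distZ A x u"
  have "0 < d"
    unfolding d_def by (rule distZ_pos[OF u xu])
  have Lf: "0 < Lf"
    using smooth by (simp add: smooth_on_def)
  have "2 * breg f f' u (A *v x) \<le> Lf * (N (A *v x - u))\<^sup>2"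
    using smooth u matrix_vector_mult_in_convA[OF x] unfolding smooth_on_def breg_def by fastforce
  also have "\<dots> \<le> Lf * (d / 2 * diamA N A)\<^sup>2"
    using is_norm_le_distZ_diamA[OF N u x] is_norm_nonneg[OF N] Lf
    by (intro mult_left_mono power_mono) (auto simp: d_def)
  also have "\<dots> = Lf * (diamA N A)\<^sup>2 / 4 * d\<^sup>2"
    by (simp add: power_mult_distrib power_divide)
  finally show ?thesis
    using \<open>0 < d\<close> by (simp add: rel_quot_def p_eq d_def pos_divide_le_eq)
qed

lemma rel_quot_ge:
  fixes A :: "real^'n^'m"
  assumes N: "is_norm N" and strong: "strongly_convex_wrt N \<mu>f f f' (convA A)"
    and p: "p \<in> rel_pairs A"
  shows "ereal (\<mu>f * (facial_dist N A)\<^sup>2 / 4) \<le> rel_quot f f' A p"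
proof -
  obtain u x where p_eq: "p = (u, x)" and u: "u \<in> convA A" and x: "x \<in> std_simplex"
    and xu: "x \<notin> Zset A u"
    using p by (auto simp: rel_pairs_def)
  obtain F where F: "F face_of convA A" "F \<noteq> {}" "F \<noteq> convA A"
    and lower: "distZ A x u / 2 * setdistN N F (convex hull {column j A | j. column j A \<notin> F})
      \<le> N (A *v x - u)"
    using exists_face_distZ_setdistN_le[OF N u x xu] .
  define d where "d = distZ A x u"
  have "0 < d"
    unfolding d_def by (rule distZ_pos[OF u xu])
  have \<mu>f: "0 \<le> \<mu>f"
    using strong by (simp add: strongly_convex_wrt_def)
  have "d / 2 * facial_dist N A \<le> N (A *v x - u)"
    using lower facial_dist_le[OF N F] \<open>0 < d\<close> unfolding d_def
    by (meson order_trans mult_left_mono half_gt_zero less_imp_le)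
  have "\<mu>f * (facial_dist N A)\<^sup>2 / 4 * d\<^sup>2 = \<mu>f * (d / 2 * facial_dist N A)\<^sup>2"
    by (simp add: power_mult_distrib power_divide)
  also have "\<dots> \<le> \<mu>f * (N (A *v x - u))\<^sup>2"
    using \<open>d / 2 * facial_dist N A \<le> N (A *v x - u)\<close> facial_dist_pos[OF N F] \<open>0 < d\<close> \<mu>f
    by (intro mult_left_mono power_mono) auto
  also have "\<dots> \<le> 2 * breg f f' u (A *v x)"
    using strong u matrix_vector_mult_in_convA[OF x]
    unfolding strongly_convex_wrt_def breg_def by fastforce
  finally show ?thesis
    using \<open>0 < d\<close> by (simp add: rel_quot_def p_eq d_def pos_le_divide_eq)
qed

lemma real_of_ereal_divide_le:
  fixes l m :: ereal
  assumes "m \<le> l" "l \<le> ereal a" "ereal b \<le> m" "0 < b"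
  shows "real_of_ereal l / real_of_ereal m \<le> a / b"
proof -
  obtain l' m' where "l = ereal l'" "m = ereal m'"
    using assms by (cases l; cases m) auto
  then show ?thesis
    using assms by (auto intro!: frac_le)
qed

theorem corollary2:
  fixes A :: "real^'n^'m"
    and N :: "real^'m \<Rightarrow> real"
    and f :: "real^'m \<Rightarrow> real"
    and f' :: "real^'m \<Rightarrow> real^'m \<Rightarrow> real"
    and D :: "(real^'m) set"
    and Lf \<mu>f :: real
  assumes "is_norm N"
    and "\<exists>i j. column i A \<noteq> column j A"
    and "open D" and "convex D" and "convA A \<subseteq> D"
    and "convex_on D f"
    and "\<forall>u\<in>D. (f has_derivative f' u) (at u)"
    and "smooth_on N Lf f f' (convA A)"
    and "strongly_convex_wrt N \<mu>f f f' (convA A)"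
  shows "L_rel f f' A \<le> ereal (Lf * (diamA N A)\<^sup>2 / 4)
    \<and> mu_rel f f' A \<ge> ereal (\<mu>f * (facial_dist N A)\<^sup>2 / 4)
    \<and> (\<mu>f > 0 \<longrightarrow> real_of_ereal (L_rel f f' A) / real_of_ereal (mu_rel f f' A)
            \<le> Lf / \<mu>f * ((diamA N A)\<^sup>2 / (facial_dist N A)\<^sup>2))"
proof -
  note N = assms(1) and smooth = assms(8) and strong = assms(9)
  have upper: "L_rel f f' A \<le> ereal (Lf * (diamA N A)\<^sup>2 / 4)"
    unfolding L_rel_def by (rule SUP_least) (rule rel_quot_le[OF N smooth])
  have lower: "ereal (\<mu>f * (facial_dist N A)\<^sup>2 / 4) \<le> mu_rel f f' A"
    unfolding mu_rel_def by (rule INF_greatest) (rule rel_quot_ge[OF N strong])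
  obtain i j where "column i A \<noteq> column j A"
    using assms(2) by blast
  then have pair: "(column i A, axis j 1) \<in> rel_pairs A"
    using column_in_convA[of i A] axis_in_std_simplex[of j]
    by (simp add: rel_pairs_def Zset_def matrix_vector_mult_basis)
  then have "mu_rel f f' A \<le> L_rel f f' A"
    unfolding mu_rel_def L_rel_def by (intro INF_le_SUP) blast
  moreover obtain F where "F face_of convA A" "F \<noteq> {}" "F \<noteq> convA A"
    using pair exists_face_distZ_setdistN_le[OF N, of "column i A" A "axis j 1"]
    by (auto simp: rel_pairs_def)
  then have "0 < facial_dist N A"
    by (rule facial_dist_pos[OF N])
  ultimately have "real_of_ereal (L_rel f f' A) / real_of_ereal (mu_rel f f' A)
      \<le> Lf / \<mu>f * ((diamA N A)\<^sup>2 / (facial_dist N A)\<^sup>2)" if "0 < \<mu>f"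
    using real_of_ereal_divide_le[OF _ upper lower] that by (simp add: field_simps)
  with upper lower show ?thesis
    by blast
qed

end
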